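(* Let $\mathcal S=[M]\times[N]$, and for each $\mathbf i=(i_1,i_2)\in\mathcal S$ let $\mathcal J_{\mathbf i}\subset\mathcal S$ and $\mathbf M_{\mathbf i}\in\mathbb R^{M\times N}$ with support contained in $\mathcal J_{\mathbf i}$. Let $\mathbf M=\sum_{\mathbf i\in\mathcal S}(\mathbf e_{i_2}\otimes\mathbf e_{i_1})\mathrm{vec}(\mathbf M_{\mathbf i})^\top\in\mathbb R^{MN\times MN}$. Then for every positive integer $p$ and every $\mathbf i=(i_1,i_2)\in\mathcal S$, $$\|(\mathbf e_{i_2}\otimes\mathbf e_{i_1})^\top\mathbf M^p\|_{\ell_0}\le\min\{J_\square\,p^2,\ MN\},$$ where $\|\cdot\|_{\ell_0}$ denotes the number of nonzero entries.
   Context: $\mathrm{vec}$ denotes column-major vectorization; $\mathbf e_{i_1}\in\mathbb R^M$, $\mathbf e_{i_2}\in\mathbb R^N$ are standard basis vectors. $J_\square=\min\{(2k_1+1)(2k_2+1): k_1,k_2\ge0 \text{ integers such that } \mathcal J_{\mathbf i}\subset\{i_1-k_1,\dots,i_1+k_1\}\times\{i_2-k_2,\dots,i_2+k_2\}\ \text{for all } \mathbf i=(i_1,i_2)\in\mathcal S\}$, i.e. the size of the smallest rectangle shape that, centered at each site, contains that site's neighborhood. *)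

theory Defs
  imports "Jordan_Normal_Form.Matrix"
begin

text \<open>Sites are 0-based: S = {0..<M} x {0..<N}.\<close>

definition sites :: "nat \<Rightarrow> nat \<Rightarrow> (nat \<times> nat) set" where
  "sites M N = {0..<M} \<times> {0..<N}"

text \<open>Column-major vectorization of a matrix.\<close>
definition vecm :: "'a mat \<Rightarrow> 'a vec" where
  "vecm A = vec (dim_row A * dim_col A) (\<lambda>k. A $$ (k mod dim_row A, k div dim_row A))"

definition kron_vec :: "'a :: times vec \<Rightarrow> 'a vec \<Rightarrow> 'a vec" where
  "kron_vec u v = vec (dim_vec u * dim_vec v) (\<lambda>k. u $ (k div dim_vec v) * v $ (k mod dim_vec v))"

definition site_vec :: "nat \<Rightarrow> nat \<Rightarrow> nat \<times> nat \<Rightarrow> real vec" where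
  "site_vec M N i = kron_vec (unit_vec N (snd i)) (unit_vec M (fst i))"

definition big_mat :: "nat \<Rightarrow> nat \<Rightarrow> (nat \<times> nat \<Rightarrow> real mat) \<Rightarrow> real mat" where
  "big_mat M N Ms = mat (M * N) (M * N)
     (\<lambda>(r, c). \<Sum>i\<in>sites M N. (site_vec M N i) $ r * (vecm (Ms i)) $ c)"

definition l0 :: "'a :: zero vec \<Rightarrow> nat" where
  "l0 v = card {k. k < dim_vec v \<and> v $ k \<noteq> 0}"

text \<open>J_square: size of the smallest centred rectangle containing every neighbourhood.\<close>
definition J_square :: "nat \<Rightarrow> nat \<Rightarrow> (nat \<times> nat \<Rightarrow> (nat \<times> nat) set) \<Rightarrow> nat" where
  "J_square M N J = (LEAST c. \<exists>k1 k2 :: nat. c = (2 * k1 + 1) * (2 * k2 + 1) \<and>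
     (\<forall>i\<in>sites M N. (\<lambda>(a, b). (int a, int b)) ` J i \<subseteq>
        {int (fst i) - int k1 .. int (fst i) + int k1} \<times> {int (snd i) - int k2 .. int (snd i) + int k2}))"

end

theory Submission
  imports Defs
begin

text \<open>Entry (r, c) of the big matrix is nonzero only if site c lies in the neighbourhood of
  site r, hence in the centred box of half-widths k1, k2 realising
  J_square = (2 k1 + 1) (2 k2 + 1). A nonzero entry of the p-th
  power is a product along a path of p such entries, so its two sites differ by at most
  p k1 and p k2 in the two coordinates. Row i of the p-th power is therefore supported on
  a (2 p k1 + 1) x (2 p k2 + 1) box, which has at most J_square p^2 sites.\<close>

lemma pow_mat_nonzero_dist_le:
  fixes A :: "'a :: semiring_1 mat" and f :: "nat \<Rightarrow> int"
  assumes A: "A \<in> carrier_mat n n"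
    and step: "\<And>r c. r < n \<Longrightarrow> c < n \<Longrightarrow> A $$ (r, c) \<noteq> 0 \<Longrightarrow> \<bar>f r - f c\<bar> \<le> int k"
    and r: "r < n"
  shows "c < n \<Longrightarrow> (A ^\<^sub>m p) $$ (r, c) \<noteq> 0 \<Longrightarrow> \<bar>f r - f c\<bar> \<le> int (p * k)"
proof (induction p arbitrary: c)
  case 0
  then show ?case using A r by (auto split: if_splits)
next
  case (Suc p)
  have "(A ^\<^sub>m Suc p) $$ (r, c) = (\<Sum>l\<in>{0..<n}. (A ^\<^sub>m p) $$ (r, l) * A $$ (l, c))"
    using A r Suc.prems by (simp add: scalar_prod_def)
  with Suc.prems obtain l where l: "l < n" "(A ^\<^sub>m p) $$ (r, l) \<noteq> 0" "A $$ (l, c) \<noteq> 0"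
    by (metis (no_types, lifting) atLeastLessThan_iff mult_not_zero sum.neutral)
  have "\<bar>f r - f l\<bar> \<le> int (p * k)" using Suc.IH l by blast
  moreover have "\<bar>f l - f c\<bar> \<le> int k" using step l Suc.prems by blast
  ultimately show ?case by simp
qed

lemma card_le_box_mod_div:
  fixes S :: "nat set"
  assumes box: "\<And>k. k \<in> S \<Longrightarrow> \<bar>int (k mod M) - int a\<bar> \<le> int s \<and> \<bar>int (k div M) - int b\<bar> \<le> int t"
  shows "card S \<le> (2 * s + 1) * (2 * t + 1)"
proof -
  let ?f = "\<lambda>k. (int (k mod M), int (k div M))"
  let ?box = "{int a - int s .. int a + int s} \<times> {int b - int t .. int b + int t}"
  have "inj ?f"
  proof (rule injI)
    fix x y assume "?f x = ?f y"
    then have "x mod M = y mod M" "x div M = y div M" by simp_all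
    then show "x = y" by (metis div_mult_mod_eq)
  qed
  moreover have "?f ` S \<subseteq> ?box" using box by (fastforce simp: abs_le_iff)
  ultimately have "card S \<le> card ?box"
    by (intro card_inj_on_le) (auto intro: inj_on_subset)
  also have "card ?box = (2 * s + 1) * (2 * t + 1)"
    by (simp add: card_cartesian_product nat_add_distrib nat_mult_distrib)
  finally show ?thesis .
qed

lemma l0_le_dim_vec: "l0 v \<le> dim_vec v"
  unfolding l0_def by (rule card_mono[where B = "{..<dim_vec v}", simplified]) auto

lemma l0_pow_mat_row_le:
  fixes A :: "'a :: semiring_1 mat"
  assumes A: "A \<in> carrier_mat n n" and r: "r < n"
    and banded: "\<And>c d. c < n \<Longrightarrow> d < n \<Longrightarrow> A $$ (c, d) \<noteq> 0 \<Longrightarrow>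
        \<bar>int (c mod M) - int (d mod M)\<bar> \<le> int k1 \<and> \<bar>int (c div M) - int (d div M)\<bar> \<le> int k2"
  shows "l0 (transpose_mat (A ^\<^sub>m p) *\<^sub>v unit_vec n r) \<le> (2 * (p * k1) + 1) * (2 * (p * k2) + 1)"
  unfolding l0_def
proof (rule card_le_box_mod_div)
  let ?v = "transpose_mat (A ^\<^sub>m p) *\<^sub>v unit_vec n r"
  fix k assume "k \<in> {k. k < dim_vec ?v \<and> ?v $ k \<noteq> 0}"
  then have k: "k < n" "(A ^\<^sub>m p) $$ (r, k) \<noteq> 0"
    using A r by (auto split: if_splits)
  have "\<bar>int (r mod M) - int (k mod M)\<bar> \<le> int (p * k1)"
    using pow_mat_nonzero_dist_le[OF A _ r k, of "\<lambda>k. int (k mod M)"] banded by blast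
  moreover have "\<bar>int (r div M) - int (k div M)\<bar> \<le> int (p * k2)"
    using pow_mat_nonzero_dist_le[OF A _ r k, of "\<lambda>k. int (k div M)"] banded by blast
  ultimately show "\<bar>int (k mod M) - int (r mod M)\<bar> \<le> int (p * k1) \<and>
      \<bar>int (k div M) - int (r div M)\<bar> \<le> int (p * k2)"
    by (simp add: abs_minus_commute)
qed

lemma linear_index_eq_iff:
  fixes a b r :: nat
  assumes "a < M"
  shows "r = a + b * M \<longleftrightarrow> (a, b) = (r mod M, r div M)"
proof
  assume "r = a + b * M"
  then show "(a, b) = (r mod M, r div M)" using assms by simp
next
  assume "(a, b) = (r mod M, r div M)"
  then show "r = a + b * M" by (simp add: mod_div_mult_eq)
qed

lemma linear_index_less:
  fixes a b :: nat
  assumes "a < M" and "b < N"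
  shows "a + b * M < M * N"
proof -
  have "a + b * M < (b + 1) * M" using assms(1) by simp
  also have "\<dots> \<le> N * M" using assms(2) by (intro mult_right_mono) auto
  finally show ?thesis by (simp add: mult.commute)
qed

lemma site_vec_eq_unit_vec:
  assumes "i \<in> sites M N"
  shows "site_vec M N i = unit_vec (M * N) (fst i + snd i * M)"
proof (rule eq_vecI)
  show "dim_vec (site_vec M N i) = dim_vec (unit_vec (M * N) (fst i + snd i * M))"
    by (simp add: site_vec_def kron_vec_def)
next
  fix l assume "l < dim_vec (unit_vec (M * N) (fst i + snd i * M))"
  then have l: "l < M * N" by simp
  have i: "fst i < M" "snd i < N" using assms by (auto simp: sites_def)
  have "l div M < N" using l by (simp add: less_mult_imp_div_less mult.commute)
  moreover have "l mod M < M" using i by simp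
  ultimately show "site_vec M N i $ l = unit_vec (M * N) (fst i + snd i * M) $ l"
    using l i linear_index_less[OF i] linear_index_eq_iff[of "fst i" M l "snd i"]
    by (auto simp: site_vec_def kron_vec_def mult.commute)
qed

lemma site_index_mem:
  assumes "r < M * N"
  shows "(r mod M, r div M) \<in> sites M N"
proof -
  have "0 < M" using assms by (cases M) auto
  then show ?thesis using assms by (simp add: sites_def less_mult_imp_div_less mult.commute)
qed

lemma big_mat_index:
  assumes Ms_dim: "\<forall>j\<in>sites M N. Ms j \<in> carrier_mat M N"
    and r: "r < M * N" and c: "c < M * N"
  shows "big_mat M N Ms $$ (r, c) = Ms (r mod M, r div M) $$ (c mod M, c div M)"
proof -
  let ?j = "(r mod M, r div M)"
  have j: "?j \<in> sites M N" using site_index_mem[OF r] .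
  have site: "site_vec M N j $ r = (if j = ?j then 1 else 0)" if "j \<in> sites M N" for j
  proof -
    have "fst j < M" "snd j < N" using that by (auto simp: sites_def)
    then show ?thesis
      using r linear_index_less linear_index_eq_iff[of "fst j" M r "snd j"]
      by (auto simp: site_vec_eq_unit_vec[OF that])
  qed
  have "big_mat M N Ms $$ (r, c) = (\<Sum>j\<in>sites M N. site_vec M N j $ r * vecm (Ms j) $ c)"
    using r c by (simp add: big_mat_def)
  also have "\<dots> = (\<Sum>j\<in>sites M N. if j = ?j then vecm (Ms j) $ c else 0)"
    by (rule sum.cong) (simp_all add: site)
  also have "\<dots> = vecm (Ms ?j) $ c"
    using j by (simp add: sites_def)
  also have "\<dots> = Ms ?j $$ (c mod M, c div M)"
    using Ms_dim j c by (auto simp: vecm_def)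
  finally show ?thesis .
qed

lemma big_mat_nonzero_imp_neighbour:
  assumes Ms_dim: "\<forall>j\<in>sites M N. Ms j \<in> carrier_mat M N"
    and Ms_supp: "\<forall>j\<in>sites M N. \<forall>a<M. \<forall>b<N. Ms j $$ (a, b) \<noteq> 0 \<longrightarrow> (a, b) \<in> J j"
    and r: "r < M * N" and c: "c < M * N"
    and nonzero: "big_mat M N Ms $$ (r, c) \<noteq> 0"
  shows "(c mod M, c div M) \<in> J (r mod M, r div M)"
proof -
  have "(c mod M, c div M) \<in> sites M N" using site_index_mem[OF c] .
  then show ?thesis
    using Ms_supp site_index_mem[OF r] nonzero big_mat_index[OF Ms_dim r c]
    by (auto simp: sites_def)
qed

lemma J_square_box:
  assumes "\<forall>j\<in>sites M N. J j \<subseteq> sites M N"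
  obtains k1 k2 where "J_square M N J = (2 * k1 + 1) * (2 * k2 + 1)"
    and "\<And>j a b. j \<in> sites M N \<Longrightarrow> (a, b) \<in> J j \<Longrightarrow>
           \<bar>int a - int (fst j)\<bar> \<le> int k1 \<and> \<bar>int b - int (snd j)\<bar> \<le> int k2"
proof -
  let ?box = "\<lambda>k1 k2. \<forall>i\<in>sites M N. (\<lambda>(a, b). (int a, int b)) ` J i \<subseteq>
        {int (fst i) - int k1 .. int (fst i) + int k1} \<times> {int (snd i) - int k2 .. int (snd i) + int k2}"
  have "?box M N" using assms by (fastforce simp: sites_def)
  then have "\<exists>c k1 k2. c = (2 * k1 + 1) * (2 * k2 + 1) \<and> ?box k1 k2" by blast
  then have "\<exists>k1 k2. J_square M N J = (2 * k1 + 1) * (2 * k2 + 1) \<and> ?box k1 k2"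
    unfolding J_square_def by (rule LeastI_ex)
  then show ?thesis
    using that by (fastforce simp: abs_le_iff)
qed

theorem lemma4:
  fixes M N :: nat
    and J :: "nat \<times> nat \<Rightarrow> (nat \<times> nat) set"
    and Ms :: "nat \<times> nat \<Rightarrow> real mat"
    and p :: nat and i :: "nat \<times> nat"
  assumes J_sub: "\<forall>j\<in>sites M N. J j \<subseteq> sites M N"
    and Ms_dim: "\<forall>j\<in>sites M N. Ms j \<in> carrier_mat M N"
    and Ms_supp: "\<forall>j\<in>sites M N. \<forall>a<M. \<forall>b<N. Ms j $$ (a, b) \<noteq> 0 \<longrightarrow> (a, b) \<in> J j"
    and p_pos: "p \<ge> 1"
    and i_in: "i \<in> sites M N"
  shows "l0 (transpose_mat (big_mat M N Ms ^\<^sub>m p) *\<^sub>v site_vec M N i)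
           \<le> min (J_square M N J * p ^ 2) (M * N)"
proof -
  let ?v = "transpose_mat (big_mat M N Ms ^\<^sub>m p) *\<^sub>v site_vec M N i"
  obtain k1 k2 where J_square: "J_square M N J = (2 * k1 + 1) * (2 * k2 + 1)"
    and box: "\<And>j a b. j \<in> sites M N \<Longrightarrow> (a, b) \<in> J j \<Longrightarrow>
           \<bar>int a - int (fst j)\<bar> \<le> int k1 \<and> \<bar>int b - int (snd j)\<bar> \<le> int k2"
    using J_square_box[OF J_sub] by blast
  have B: "big_mat M N Ms \<in> carrier_mat (M * N) (M * N)" by (simp add: big_mat_def)
  have i: "fst i < M" "snd i < N" using i_in by (auto simp: sites_def)
  have banded: "\<bar>int (r mod M) - int (c mod M)\<bar> \<le> int k1 \<and> \<bar>int (r div M) - int (c div M)\<bar> \<le> int k2"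
    if "r < M * N" "c < M * N" "big_mat M N Ms $$ (r, c) \<noteq> 0" for r c
    using box[OF site_index_mem big_mat_nonzero_imp_neighbour[OF Ms_dim Ms_supp that]] that
    by (simp add: abs_minus_commute)
  have "l0 ?v \<le> (2 * (p * k1) + 1) * (2 * (p * k2) + 1)"
    unfolding site_vec_eq_unit_vec[OF i_in]
    by (rule l0_pow_mat_row_le[OF B linear_index_less[OF i] banded])
  also have "\<dots> \<le> (p * (2 * k1 + 1)) * (p * (2 * k2 + 1))"
    using p_pos by (intro mult_le_mono) (simp_all add: algebra_simps)
  also have "\<dots> = J_square M N J * p ^ 2"
    by (simp add: J_square power2_eq_square algebra_simps)
  moreover have "l0 ?v \<le> M * N"
    using l0_le_dim_vec[of ?v] B by (auto split: if_splits)
  ultimately show ?thesis by simp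
qed

end
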